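(* Let $\mathcal{N}$ be a sound deterministic negotiation, let $\pi$ be a local path of $\mathcal{N}$, and let $n_0$ be the first node of $\pi$. Then $\pi$ is realizable from every reachable configuration that enables $n_0$.
   Context: A negotiation is a tuple $\mathcal{N}=(\mathit{Proc},N,\mathit{dom},R,\delta)$ where $\mathit{Proc}$ is a finite set of processes, $N$ is a finite set of nodes, $\mathit{dom}:N\to 2^{\mathit{Proc}}\setminus\{\emptyset\}$, there are two distinguished nodes $n_{\mathit{init}},n_{\mathit{fin}}$ with $\mathit{dom}(n_{\mathit{init}})=\mathit{dom}(n_{\mathit{fin}})=\mathit{Proc}$, $R$ is a set of results, each node $n$ has a set $\mathit{out}(n)\subseteq R$ of results (nonempty for $n\neq n_{\mathit{fin}}$), and $\delta(n,a,p)\subseteq N$ is defined and nonempty exactly when $a\in\mathit{out}(n)$ and $p\in\mathit{dom}(n)$, with $p\in\mathit{dom}(n')$ for all $n'\in\delta(n,a,p)$. A configuration is a map $C$ assigning to each process a nonempty set of nodes; $C_{\mathit{init}}(p)=\{n_{\mathit{init}}\}$, $C_{\mathit{fin}}(p)=\{n_{\mathit{fin}}\}$. A node $n$ is enabled in $C$ if $n\in C(p)$ for all $p\in\mathit{dom}(n)$. If $n$ is enabled in $C$ and $a\in\mathit{out}(n)$, then $C\xrightarrow{(n,a)}C'$ where $C'(p)=\delta(n,a,p)$ for $p\in\mathit{dom}(n)$ and $C'(p)=C(p)$ otherwise. A run from $C_1$ is a sequence $(n_1,a_1)(n_2,a_2)\cdots$ with $C_1\xrightarrow{(n_1,a_1)}C_2\xrightarrow{(n_2,a_2)}\cdots$;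 a configuration is reachable if some finite run from $C_{\mathit{init}}$ leads to it; a successful run is a finite run from $C_{\mathit{init}}$ to $C_{\mathit{fin}}$. $\mathcal{N}$ is sound if every finite run from $C_{\mathit{init}}$ can be extended to a successful run. The graph of $\mathcal{N}$ has vertex set $N$ and edges $n\xrightarrow{p,a}n'$ whenever $n'\in\delta(n,a,p)$; a local path is a path in this graph. $\mathcal{N}$ is deterministic if every $\delta(n,a,p)$ is a singleton. For a run $v$, $\mathit{dom}(v)$ is the union of $\mathit{dom}(n)$ over all $(n,a)$ occurring in $v$. A local path $n_0\xrightarrow{p_0,a_0}n_1\cdots\xrightarrow{p_{k-1},a_{k-1}}n_k$ is realizable from a configuration $C$ if there is a run $C\xrightarrow{(n_0,a_0)}C_0'\xrightarrow{w_1}C_1\xrightarrow{(n_1,a_1)}C_1'\cdots C_{k-1}\xrightarrow{(n_{k-1},a_{k-1})}C_{k-1}'\xrightarrow{w_k}C_k$ such that $p_i\notin\mathit{dom}(w_{i+1})$ for all $i=0,\dots,k-1$. *)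

theory Defs
  imports Main
begin

(* Processes are the finite type 'p (Proc = UNIV), nodes the finite type 'n (N = UNIV),
   results the type 'r (R = UNIV).  A negotiation is given by
   D (= dom), ni (= n_init), nf (= n_fin), out, and del (= delta);
   undefined values of delta are represented by the empty set. *)

definition negotiation ::
  "('n::finite \<Rightarrow> 'p::finite set) \<Rightarrow> 'n \<Rightarrow> 'n \<Rightarrow> ('n \<Rightarrow> 'r set)
     \<Rightarrow> ('n \<Rightarrow> 'r \<Rightarrow> 'p \<Rightarrow> 'n set) \<Rightarrow> bool" where
  "negotiation D ni nf out del \<longleftrightarrow>
     (\<forall>n. D n \<noteq> {}) \<and> D ni = UNIV \<and> D nf = UNIV \<and>
     (\<forall>n. n \<noteq> nf \<longrightarrow> out n \<noteq> {}) \<and>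
     (\<forall>n a p. del n a p \<noteq> {} \<longleftrightarrow> (a \<in> out n \<and> p \<in> D n)) \<and>
     (\<forall>n a p n'. n' \<in> del n a p \<longrightarrow> p \<in> D n')"

definition deterministic ::
  "('n \<Rightarrow> 'p set) \<Rightarrow> ('n \<Rightarrow> 'r set) \<Rightarrow> ('n \<Rightarrow> 'r \<Rightarrow> 'p \<Rightarrow> 'n set) \<Rightarrow> bool" where
  "deterministic D out del \<longleftrightarrow>
     (\<forall>n a p. a \<in> out n \<and> p \<in> D n \<longrightarrow> (\<exists>n'. del n a p = {n'}))"

definition enabled :: "('n \<Rightarrow> 'p set) \<Rightarrow> ('p \<Rightarrow> 'n set) \<Rightarrow> 'n \<Rightarrow> bool" where
  "enabled D C n \<longleftrightarrow> (\<forall>p\<in>D n. n \<in> C p)"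

definition step ::
  "('n \<Rightarrow> 'p set) \<Rightarrow> ('n \<Rightarrow> 'r set) \<Rightarrow> ('n \<Rightarrow> 'r \<Rightarrow> 'p \<Rightarrow> 'n set)
     \<Rightarrow> ('p \<Rightarrow> 'n set) \<Rightarrow> 'n \<times> 'r \<Rightarrow> ('p \<Rightarrow> 'n set) \<Rightarrow> bool" where
  "step D out del C na C' \<longleftrightarrow>
     enabled D C (fst na) \<and> snd na \<in> out (fst na) \<and>
     C' = (\<lambda>p. if p \<in> D (fst na) then del (fst na) (snd na) p else C p)"

inductive steps ::
  "('n \<Rightarrow> 'p set) \<Rightarrow> ('n \<Rightarrow> 'r set) \<Rightarrow> ('n \<Rightarrow> 'r \<Rightarrow> 'p \<Rightarrow> 'n set)
     \<Rightarrow> ('p \<Rightarrow> 'n set) \<Rightarrow> ('n \<times> 'r) list \<Rightarrow> ('p \<Rightarrow> 'n set) \<Rightarrow> bool"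
  for D out del where
  steps_Nil: "steps D out del C [] C"
| steps_Cons: "step D out del C na C' \<Longrightarrow> steps D out del C' w C''
                 \<Longrightarrow> steps D out del C (na # w) C''"

definition C_init :: "'n \<Rightarrow> ('p \<Rightarrow> 'n set)" where
  "C_init ni = (\<lambda>p. {ni})"

definition C_fin :: "'n \<Rightarrow> ('p \<Rightarrow> 'n set)" where
  "C_fin nf = (\<lambda>p. {nf})"

definition reachable ::
  "('n \<Rightarrow> 'p set) \<Rightarrow> 'n \<Rightarrow> ('n \<Rightarrow> 'r set) \<Rightarrow> ('n \<Rightarrow> 'r \<Rightarrow> 'p \<Rightarrow> 'n set)
     \<Rightarrow> ('p \<Rightarrow> 'n set) \<Rightarrow> bool" where
  "reachable D ni out del C \<longleftrightarrow> (\<exists>w. steps D out del (C_init ni) w C)"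

definition sound ::
  "('n \<Rightarrow> 'p set) \<Rightarrow> 'n \<Rightarrow> 'n \<Rightarrow> ('n \<Rightarrow> 'r set) \<Rightarrow> ('n \<Rightarrow> 'r \<Rightarrow> 'p \<Rightarrow> 'n set) \<Rightarrow> bool" where
  "sound D ni nf out del \<longleftrightarrow>
     (\<forall>w C. steps D out del (C_init ni) w C \<longrightarrow> (\<exists>v. steps D out del C v (C_fin nf)))"

definition run_dom :: "('n \<Rightarrow> 'p set) \<Rightarrow> ('n \<times> 'r) list \<Rightarrow> 'p set" where
  "run_dom D v = (\<Union>x\<in>set v. D (fst x))"

(* A local path n0 -(p0,a0)-> n1 ... -(p_{k-1},a_{k-1})-> nk is represented by its
   first node n0 and the list of labelled edges [(p0,a0,n1), ..., (p_{k-1},a_{k-1},nk)]. *)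
fun local_path ::
  "('n \<Rightarrow> 'r \<Rightarrow> 'p \<Rightarrow> 'n set) \<Rightarrow> 'n \<Rightarrow> ('p \<times> 'r \<times> 'n) list \<Rightarrow> bool" where
  "local_path del n [] = True"
| "local_path del n ((p, a, n') # es) = (n' \<in> del n a p \<and> local_path del n' es)"

fun realizable_from ::
  "('n \<Rightarrow> 'p set) \<Rightarrow> ('n \<Rightarrow> 'r set) \<Rightarrow> ('n \<Rightarrow> 'r \<Rightarrow> 'p \<Rightarrow> 'n set)
     \<Rightarrow> ('p \<Rightarrow> 'n set) \<Rightarrow> 'n \<Rightarrow> ('p \<times> 'r \<times> 'n) list \<Rightarrow> bool" where
  "realizable_from D out del C n [] = True"
| "realizable_from D out del C n ((p, a, n') # es) =
     (\<exists>C0 w C1. step D out del C (n, a) C0 \<and> steps D out del C0 w C1 \<and>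
                 p \<notin> run_dom D w \<and> realizable_from D out del C1 n' es)"

end

theory Submission
  imports Defs
begin

text \<open>Fire the first node n0 of the path with its result a; by determinism the process p
  labelling the first edge then sits exactly at the next node n1. Soundness extends this run to
  the final configuration, and in that extension the first node involving p can only be n1
  (or there is none, and n1 is the final node). The prefix before it avoids p and ends in a
  reachable configuration enabling n1, so induction along the path applies.\<close>

lemma steps_append:
  assumes "steps D out del C u C'" "steps D out del C' v C''"
  shows "steps D out del C (u @ v) C''"
  using assms by (induction rule: steps.induct) (auto intro: steps.intros)

lemma reachable_steps:
  assumes "reachable D ni out del C" "steps D out del C w C'"
  shows "reachable D ni out del C'"
  using assms steps_append unfolding reachable_def by blast

lemma step_deterministic_successor:
  assumes "negotiation D ni nf out del" "deterministic D out del"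
    and "n' \<in> del n a p" "enabled D C n"
  obtains C' where "step D out del C (n, a) C'" "C' p = {n'}"
proof -
  have a: "a \<in> out n" and p: "p \<in> D n"
    using assms(1,3) unfolding negotiation_def by blast+
  then obtain n'' where "del n a p = {n''}"
    using assms(2) unfolding deterministic_def by blast
  with assms(3) have "del n a p = {n'}" by simp
  then show thesis
    using assms(4) a p by (intro that[of "\<lambda>q. if q \<in> D n then del n a q else C q"])
      (simp_all add: step_def fun_eq_iff)
qed

lemma steps_enable_avoiding:
  assumes "steps D out del C v C'" "C p = {n}" "C' p = {n} \<Longrightarrow> enabled D C' n"
  shows "\<exists>w C\<^sub>1. steps D out del C w C\<^sub>1 \<and> p \<notin> run_dom D w \<and> enabled D C\<^sub>1 n"
  using assms
proof (induction rule: steps.induct)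
  case (steps_Nil C)
  then show ?case by (intro exI[of _ "[]"] exI[of _ C]) (simp add: run_dom_def steps.steps_Nil)
next
  case (steps_Cons C na C' w C'')
  obtain m a where na: "na = (m, a)" by (cases na)
  show ?case
  proof (cases "p \<in> D m")
    case True
    then have "m = n" using steps_Cons(1,4) na by (auto simp: step_def enabled_def)
    then have "enabled D C n" using steps_Cons(1) na by (simp add: step_def)
    then show ?thesis by (intro exI[of _ "[]"] exI[of _ C]) (simp add: run_dom_def steps.steps_Nil)
  next
    case False
    then have "C' p = {n}" using steps_Cons(1,4) na by (simp add: step_def)
    then obtain w' C\<^sub>1 where w': "steps D out del C' w' C\<^sub>1" "p \<notin> run_dom D w'" "enabled D C\<^sub>1 n"
      using steps_Cons.IH steps_Cons.prems(2) by blast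
    have "steps D out del C (na # w') C\<^sub>1" using steps_Cons(1) w'(1) by (rule steps.intros)
    moreover have "p \<notin> run_dom D (na # w')" using w'(2) False na by (simp add: run_dom_def)
    ultimately show ?thesis using w'(3) by blast
  qed
qed

theorem lemma3p1:
  fixes D :: "'n::finite \<Rightarrow> 'p::finite set"
    and ni nf :: 'n
    and out :: "'n \<Rightarrow> 'r set"
    and del :: "'n \<Rightarrow> 'r \<Rightarrow> 'p \<Rightarrow> 'n set"
    and n0 :: 'n
    and es :: "('p \<times> 'r \<times> 'n) list"
    and C :: "'p \<Rightarrow> 'n set"
  assumes "negotiation D ni nf out del"
    and "sound D ni nf out del"
    and "deterministic D out del"
    and "local_path del n0 es"
    and "reachable D ni out del C"
    and "enabled D C n0"
  shows "realizable_from D out del C n0 es"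
  using assms(4-6)
proof (induction es arbitrary: n0 C)
  case Nil
  then show ?case by simp
next
  case (Cons e es)
  obtain p a n' where e: "e = (p, a, n')" by (cases e)
  with Cons.prems have n': "n' \<in> del n0 a p" and path: "local_path del n' es" by auto
  obtain C0 where st: "step D out del C (n0, a) C0" and C0p: "C0 p = {n'}"
    using step_deterministic_successor[OF assms(1,3) n' Cons.prems(3)] .
  have C0: "reachable D ni out del C0"
    using reachable_steps[OF Cons.prems(2)] st by (blast intro: steps.intros)
  then obtain v where "steps D out del C0 v (C_fin nf)"
    using assms(2) unfolding reachable_def sound_def by blast
  moreover have "C_fin nf p = {n'} \<Longrightarrow> enabled D (C_fin nf) n'"
    by (simp add: C_fin_def enabled_def)
  ultimately obtain w C1 where w: "steps D out del C0 w C1" "p \<notin> run_dom D w" "enabled D C1 n'"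
    using steps_enable_avoiding C0p by metis
  have "reachable D ni out del C1" using reachable_steps[OF C0 w(1)] .
  with path have "realizable_from D out del C1 n' es" using w(3) by (rule Cons.IH)
  with e st w show ?case by auto
qed

end
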